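(* Let $n\ge 2$ be an integer and let $E$ be a nonsingular generalized Weierstrass elliptic curve over $\mathbb{Z}_n$. Then the number of (distinct) generalized Weierstrass elliptic curves over $\mathbb{Z}_n$ isomorphic to $E$ is $\frac{\Phi(n^4)}{|\mathrm{Aut}(E)|}$, where $\Phi$ is Euler's totient function.
   Context: A generalized Weierstrass curve over $\mathbb{Z}_n$ is $E: y^2+a_1xy+a_3y=x^3+a_2x^2+a_4x+a_6$ with $(a_1,a_2,a_3,a_4,a_6)\in\mathbb{Z}_n^5$ (distinct tuples give distinct curves). With $b_2=a_1^2+4a_2$, $b_4=2a_4+a_1a_3$, $b_6=a_3^2+4a_6$, $b_8=a_1^2a_6+4a_2a_6-a_1a_3a_4+a_2a_3^2-a_4^2$, its discriminant is $\Delta=-b_2^2b_8-8b_4^3-27b_6^2+9b_2b_4b_6$, and $E$ is nonsingular iff $\Delta\in\mathbb{Z}_n^*$. For $u\in\mathbb{Z}_n^*$ and $r,s,t\in\mathbb{Z}_n$, the change of variables $x=u^2x'+r$, $y=u^3y'+u^2sx'+t$ transforms $E$ into the curve with coefficients $a_i'$ determined by $ua_1'=a_1+2s$, $u^2a_2'=a_2-sa_1+3r-s^2$, $u^3a_3'=a_3+ra_1+2t$, $u^4a_4'=a_4-sa_3+2ra_2-(t+rs)a_1+3r^2-2st$, $u^6a_6'=a_6+ra_4+r^2a_2+r^3-ta_3-t^2-rta_1$. Two generalized curves are isomorphic if one is obtained from the other by such a transformation. $\mathrm{Aut}(E)$ is the set of such transformations (parametrized by $(u,r,s,t)\in\mathbb{Z}_n^*\times\mathbb{Z}_n^3$)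 mapping $E$ to itself. *)

theory Defs
  imports "HOL-Number_Theory.Number_Theory"
begin

text \<open>Elements of Z_n are represented by their canonical representatives in {0..<n}.
A generalized Weierstrass curve over Z_n is a coefficient tuple (a1,a2,a3,a4,a6).\<close>

type_synonym wcurve = "int \<times> int \<times> int \<times> int \<times> int"

definition curves :: "int \<Rightarrow> wcurve set" where
  "curves n = {0..<n} \<times> {0..<n} \<times> {0..<n} \<times> {0..<n} \<times> {0..<n}"

definition disc :: "wcurve \<Rightarrow> int" where
  "disc E = (case E of (a1,a2,a3,a4,a6) \<Rightarrow>
     let b2 = a1^2 + 4*a2; b4 = 2*a4 + a1*a3; b6 = a3^2 + 4*a6;
         b8 = a1^2*a6 + 4*a2*a6 - a1*a3*a4 + a2*a3^2 - a4^2
     in - (b2^2*b8) - 8*b4^3 - 27*b6^2 + 9*b2*b4*b6)"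

definition nonsingular :: "int \<Rightarrow> wcurve \<Rightarrow> bool" where
  "nonsingular n E \<longleftrightarrow> coprime (disc E) n"

definition params :: "int \<Rightarrow> (int \<times> int \<times> int \<times> int) set" where
  "params n = {(u,r,s,t). u \<in> {0..<n} \<and> coprime u n \<and> r \<in> {0..<n} \<and> s \<in> {0..<n} \<and> t \<in> {0..<n}}"

definition transforms :: "int \<Rightarrow> wcurve \<Rightarrow> int \<times> int \<times> int \<times> int \<Rightarrow> wcurve \<Rightarrow> bool" where
  "transforms n E p E' = (case E of (a1,a2,a3,a4,a6) \<Rightarrow> case E' of (a1',a2',a3',a4',a6') \<Rightarrow>
     case p of (u,r,s,t) \<Rightarrow>
       [u*a1' = a1 + 2*s] (mod n) \<and>
       [u^2*a2' = a2 - s*a1 + 3*r - s^2] (mod n) \<and>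
       [u^3*a3' = a3 + r*a1 + 2*t] (mod n) \<and>
       [u^4*a4' = a4 - s*a3 + 2*r*a2 - (t + r*s)*a1 + 3*r^2 - 2*s*t] (mod n) \<and>
       [u^6*a6' = a6 + r*a4 + r^2*a2 + r^3 - t*a3 - t^2 - r*t*a1] (mod n))"

definition iso_class :: "int \<Rightarrow> wcurve \<Rightarrow> wcurve set" where
  "iso_class n E = {E' \<in> curves n. \<exists>p \<in> params n. transforms n E p E'}"

definition Aut :: "int \<Rightarrow> wcurve \<Rightarrow> (int \<times> int \<times> int \<times> int) set" where
  "Aut n E = {p \<in> params n. transforms n E p E}"

end

theory Submission
  imports Defs "HOL-Algebra.Group_Action"
begin

text \<open>
  Changes of variables compose, so the parameters \<open>(u, r, s, t) \<in> \<int>\<^sub>n\<^sup>* \<times> \<int>\<^sub>n\<^sup>3\<close> form a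
  group of order \<open>\<Phi>(n) n\<^sup>3 = \<Phi>(n\<^sup>4)\<close>, and this group acts on the coefficient tuples
  modulo \<open>n\<close>. The isomorphism class of \<open>E\<close> is its orbit and \<open>Aut(E)\<close> its stabilizer,
  so the orbit-stabilizer theorem gives \<open>|class of E| \<cdot> |Aut(E)| = \<Phi>(n\<^sup>4)\<close>.
\<close>

type_synonym wparam = "int \<times> int \<times> int \<times> int"

definition curve_translate :: "int \<times> int \<times> int \<Rightarrow> wcurve \<Rightarrow> wcurve" where
  "curve_translate rst E = (case rst of (r, s, t) \<Rightarrow> case E of (a1, a2, a3, a4, a6) \<Rightarrow>
     (a1 + 2*s, a2 - s*a1 + 3*r - s^2, a3 + r*a1 + 2*t,
      a4 - s*a3 + 2*r*a2 - (t + r*s)*a1 + 3*r^2 - 2*s*t,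
      a6 + r*a4 + r^2*a2 + r^3 - t*a3 - t^2 - r*t*a1))"

definition curve_untranslate :: "int \<times> int \<times> int \<Rightarrow> wcurve \<Rightarrow> wcurve" where
  "curve_untranslate rst E = (case rst of (r, s, t) \<Rightarrow> case E of (b1, b2, b3, b4, b6) \<Rightarrow>
     let a1 = b1 - 2*s;
         a2 = b2 + s*a1 - 3*r + s^2;
         a3 = b3 - r*a1 - 2*t;
         a4 = b4 + s*a3 - 2*r*a2 + (t + r*s)*a1 - 3*r^2 + 2*s*t;
         a6 = b6 - r*a4 - r^2*a2 - r^3 + t*a3 + t^2 + r*t*a1
     in (a1, a2, a3, a4, a6))"

definition curve_scale :: "int \<Rightarrow> wcurve \<Rightarrow> wcurve" where
  "curve_scale u E = (case E of (a1, a2, a3, a4, a6) \<Rightarrow> (u*a1, u^2*a2, u^3*a3, u^4*a4, u^6*a6))"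

text \<open>
  \<open>transforms n E (u, r, s, t) E'\<close> says \<open>curve_scale u E' \<equiv> curve_translate (r, s, t) E\<close>
  modulo \<open>n\<close>, so \<open>E\<close> is recovered from \<open>E'\<close> by \<open>curve_act\<close>. In this direction the
  parameters act on the left (\<open>curve_act_comp\<close>).
\<close>

definition curve_act :: "wparam \<Rightarrow> wcurve \<Rightarrow> wcurve" where
  "curve_act p E = (case p of (u, r, s, t) \<Rightarrow> curve_untranslate (r, s, t) (curve_scale u E))"

definition param_comp :: "wparam \<Rightarrow> wparam \<Rightarrow> wparam" where
  "param_comp p q = (case p of (u, r, s, t) \<Rightarrow> case q of (u', r', s', t') \<Rightarrow>
     (u*u', r + u^2*r', s + u*s', t + u^3*t' + u^2*s*r'))"

definition curve_mod :: "int \<Rightarrow> wcurve \<Rightarrow> wcurve" where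
  "curve_mod n E = (case E of (a1, a2, a3, a4, a6) \<Rightarrow>
     (a1 mod n, a2 mod n, a3 mod n, a4 mod n, a6 mod n))"

definition param_mod :: "int \<Rightarrow> wparam \<Rightarrow> wparam" where
  "param_mod n p = (case p of (u, r, s, t) \<Rightarrow> (u mod n, r mod n, s mod n, t mod n))"

lemma curve_translate_untranslate: "curve_translate rst (curve_untranslate rst E) = E"
  by (cases rst; cases E)
    (simp add: curve_translate_def curve_untranslate_def Let_def algebra_simps power2_eq_square power3_eq_cube)

lemma curve_untranslate_translate: "curve_untranslate rst (curve_translate rst E) = E"
  by (cases rst; cases E)
    (simp add: curve_translate_def curve_untranslate_def Let_def algebra_simps power2_eq_square power3_eq_cube)

lemma curve_act_comp: "curve_act p (curve_act q E) = curve_act (param_comp p q) E"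
  by (cases p; cases q; cases E)
    (simp add: curve_act_def curve_untranslate_def curve_scale_def param_comp_def Let_def
      algebra_simps power2_eq_square power3_eq_cube numeral_eq_Suc)

lemma curve_act_one [simp]: "curve_act (1, 0, 0, 0) E = E"
  by (cases E) (simp add: curve_act_def curve_scale_def curve_untranslate_def)

lemma param_comp_assoc: "param_comp (param_comp p q) w = param_comp p (param_comp q w)"
  by (cases p; cases q; cases w)
    (simp add: param_comp_def algebra_simps power2_eq_square power3_eq_cube)

lemma param_comp_one_left [simp]: "param_comp (1, 0, 0, 0) p = p"
  by (cases p) (simp add: param_comp_def)

lemma param_comp_inverse:
  "param_comp (v, - (v^2*r), - (v*s), v^3*(s*r - t)) (u, r, s, t) = (v*u, 0, 0, 0)"
  by (simp add: param_comp_def algebra_simps power2_eq_square power3_eq_cube)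

lemma curve_mod_eq_iff:
  "curve_mod n E = curve_mod n E' \<longleftrightarrow>
     (case E of (a1, a2, a3, a4, a6) \<Rightarrow> case E' of (b1, b2, b3, b4, b6) \<Rightarrow>
       [a1 = b1] (mod n) \<and> [a2 = b2] (mod n) \<and> [a3 = b3] (mod n) \<and>
       [a4 = b4] (mod n) \<and> [a6 = b6] (mod n))"
  by (cases E; cases E') (simp add: curve_mod_def cong_def)

lemma param_mod_eq_iff:
  "param_mod n p = param_mod n p' \<longleftrightarrow>
     (case p of (u, r, s, t) \<Rightarrow> case p' of (u', r', s', t') \<Rightarrow>
       [u = u'] (mod n) \<and> [r = r'] (mod n) \<and> [s = s'] (mod n) \<and> [t = t'] (mod n))"
  by (cases p; cases p') (simp add: param_mod_def cong_def)

lemma curve_mod_curve_mod [simp]: "curve_mod n (curve_mod n E) = curve_mod n E"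
  by (cases E) (simp add: curve_mod_def)

lemma param_mod_param_mod [simp]: "param_mod n (param_mod n p) = param_mod n p"
  by (cases p) (simp add: param_mod_def)

lemma curve_mod_curves: "E \<in> curves n \<Longrightarrow> curve_mod n E = E"
  by (cases E) (simp add: curve_mod_def curves_def)

lemma curve_mod_in_curves: "n > 0 \<Longrightarrow> curve_mod n E \<in> curves n"
  by (cases E) (simp add: curve_mod_def curves_def)

lemma param_mod_params: "p \<in> params n \<Longrightarrow> param_mod n p = p"
  by (cases p) (simp add: param_mod_def params_def)

lemma param_mod_in_params: "n > 0 \<Longrightarrow> coprime (fst p) n \<Longrightarrow> param_mod n p \<in> params n"
  by (cases p) (simp add: param_mod_def params_def)

lemma curve_mod_curve_translate_cong:
  "curve_mod n E = curve_mod n E' \<Longrightarrow>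
    curve_mod n (curve_translate rst E) = curve_mod n (curve_translate rst E')"
  by (cases rst; cases E; cases E') (simp add: curve_mod_eq_iff curve_translate_def,
    (elim conjE; intro conjI cong_add cong_diff cong_mult cong_pow cong_refl; assumption))

lemma curve_mod_curve_untranslate_cong:
  "curve_mod n E = curve_mod n E' \<Longrightarrow>
    curve_mod n (curve_untranslate rst E) = curve_mod n (curve_untranslate rst E')"
  by (cases rst; cases E; cases E') (simp add: curve_mod_eq_iff curve_untranslate_def Let_def,
    (elim conjE; intro conjI cong_add cong_diff cong_mult cong_pow cong_refl; assumption))

lemma curve_mod_curve_act_cong:
  "param_mod n p = param_mod n p' \<Longrightarrow> curve_mod n E = curve_mod n E' \<Longrightarrow>
    curve_mod n (curve_act p E) = curve_mod n (curve_act p' E')"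
  by (cases p; cases p'; cases E; cases E')
    (simp add: curve_mod_eq_iff param_mod_eq_iff curve_act_def curve_scale_def
      curve_untranslate_def Let_def,
     (elim conjE; intro conjI cong_add cong_diff cong_mult cong_pow cong_refl; assumption))

lemma param_mod_param_comp_cong:
  "param_mod n p = param_mod n p' \<Longrightarrow> param_mod n q = param_mod n q' \<Longrightarrow>
    param_mod n (param_comp p q) = param_mod n (param_comp p' q')"
  by (cases p; cases p'; cases q; cases q') (simp add: param_mod_eq_iff param_comp_def,
    (elim conjE; intro conjI cong_add cong_diff cong_mult cong_pow cong_refl; assumption))

lemma transforms_iff: "transforms n E p E' \<longleftrightarrow> curve_mod n (curve_act p E') = curve_mod n E"
proof -
  obtain u rst where p: "p = (u, rst)"
    by (cases p)
  have "transforms n E p E' \<longleftrightarrow>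
      curve_mod n (curve_scale u E') = curve_mod n (curve_translate rst E)"
    by (cases rst; cases E; cases E')
      (simp add: p transforms_def curve_mod_eq_iff curve_scale_def curve_translate_def)
  also have "\<dots> \<longleftrightarrow> curve_mod n (curve_untranslate rst (curve_scale u E')) =
      curve_mod n (curve_untranslate rst (curve_translate rst E))"
    by (metis curve_mod_curve_untranslate_cong curve_mod_curve_translate_cong
        curve_translate_untranslate)
  also have "\<dots> \<longleftrightarrow> curve_mod n (curve_act p E') = curve_mod n E"
    by (simp add: p curve_act_def curve_untranslate_translate)
  finally show ?thesis .
qed

definition param_group :: "int \<Rightarrow> wparam monoid" where
  "param_group n =
    \<lparr>carrier = params n, monoid.mult = (\<lambda>p q. param_mod n (param_comp p q)), one = (1, 0, 0, 0)\<rparr>"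

lemma group_param_group:
  assumes "n \<ge> 2"
  shows "group (param_group n)"
proof (rule groupI; unfold param_group_def monoid.simps partial_object.simps)
  show "(1, 0, 0, 0) \<in> params n"
    using assms by (simp add: params_def)
next
  fix p q assume "p \<in> params n" "q \<in> params n"
  then have "coprime (fst (param_comp p q)) n"
    by (cases p; cases q) (simp add: params_def param_comp_def)
  then show "param_mod n (param_comp p q) \<in> params n"
    using assms by (simp add: param_mod_in_params)
next
  fix p q w
  show "param_mod n (param_comp (param_mod n (param_comp p q)) w) =
        param_mod n (param_comp p (param_mod n (param_comp q w)))"
    by (metis param_mod_param_comp_cong param_mod_param_mod param_comp_assoc)
next
  fix p assume "p \<in> params n"
  then show "param_mod n (param_comp (1, 0, 0, 0) p) = p"
    by (simp add: param_mod_params)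
next
  fix p assume "p \<in> params n"
  then obtain u r s t where p: "p = (u, r, s, t)" and "coprime u n"
    by (auto simp: params_def)
  then obtain v where v: "[u * v = 1] (mod n)"
    using cong_solve_coprime_int by blast
  then have "coprime v n"
    by (metis coprime_iff_invertible_int mult.commute)
  define q where "q = param_mod n (v, - (v^2*r), - (v*s), v^3*(s*r - t))"
  have "q \<in> params n"
    using \<open>coprime v n\<close> assms by (simp add: q_def param_mod_in_params)
  moreover have "param_mod n (param_comp q p) = (1, 0, 0, 0)"
  proof -
    have "param_mod n (param_comp q p) =
        param_mod n (param_comp (v, - (v^2*r), - (v*s), v^3*(s*r - t)) p)"
      unfolding q_def by (rule param_mod_param_comp_cong) simp_all
    also have "\<dots> = param_mod n (v * u, 0, 0, 0)"
      by (simp add: p param_comp_inverse)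
    also have "\<dots> = (1, 0, 0, 0)"
    proof -
      have "[v * u = 1] (mod n)"
        using v by (simp add: mult.commute)
      then show ?thesis
        using assms by (simp add: param_mod_def cong_def)
    qed
    finally show ?thesis .
  qed
  ultimately show "\<exists>q \<in> params n. param_mod n (param_comp q p) = (1, 0, 0, 0)"
    by blast
qed

definition curve_action :: "int \<Rightarrow> wparam \<Rightarrow> wcurve \<Rightarrow> wcurve" where
  "curve_action n p = (\<lambda>E \<in> curves n. curve_mod n (curve_act p E))"

lemma curve_action_param_comp:
  assumes "n > 0" and "E \<in> curves n"
  shows "curve_action n (param_mod n (param_comp p q)) E = curve_action n p (curve_action n q E)"
proof -
  have "curve_mod n (curve_act (param_mod n (param_comp p q)) E) =
      curve_mod n (curve_act (param_comp p q) E)"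
    by (rule curve_mod_curve_act_cong) simp_all
  also have "\<dots> = curve_mod n (curve_act p (curve_mod n (curve_act q E)))"
    unfolding curve_act_comp [symmetric] by (rule curve_mod_curve_act_cong) simp_all
  finally show ?thesis
    using assms by (simp add: curve_action_def curve_mod_in_curves)
qed

lemma group_action_curve_action:
  assumes "n \<ge> 2"
  shows "group_action (param_group n) (curves n) (curve_action n)"
proof -
  interpret G: group "param_group n"
    using assms by (rule group_param_group)
  have mult: "curve_action n (p \<otimes>\<^bsub>param_group n\<^esub> q) E = curve_action n p (curve_action n q E)"
    if "E \<in> curves n" for p q E
    using that assms by (simp add: param_group_def curve_action_param_comp)
  have one: "curve_action n \<one>\<^bsub>param_group n\<^esub> E = E" if "E \<in> curves n" for E
    using that by (simp add: param_group_def curve_action_def curve_mod_curves)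
  have closed: "curve_action n p \<in> curves n \<rightarrow> curves n" for p
    using assms by (auto simp: curve_action_def curve_mod_in_curves)
  have Bij: "curve_action n p \<in> Bij (curves n)" if p: "p \<in> carrier (param_group n)" for p
  proof -
    let ?q = "inv\<^bsub>param_group n\<^esub> p"
    have "bij_betw (curve_action n p) (curves n) (curves n)"
    proof (rule bij_betwI [OF closed closed])
      fix E assume "E \<in> curves n"
      then show "curve_action n ?q (curve_action n p E) = E"
        and "curve_action n p (curve_action n ?q E) = E"
        using p by (simp_all flip: mult add: one)
    qed
    then show ?thesis
      by (simp add: Bij_def curve_action_def)
  qed
  have "curve_action n \<in> hom (param_group n) (BijGroup (curves n))"
  proof (rule homI)
    fix p q assume pq: "p \<in> carrier (param_group n)" "q \<in> carrier (param_group n)"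
    have "curve_action n (p \<otimes>\<^bsub>param_group n\<^esub> q) E =
        compose (curves n) (curve_action n p) (curve_action n q) E" for E
      by (cases "E \<in> curves n") (simp_all add: compose_def mult, simp add: curve_action_def)
    then show "curve_action n (p \<otimes>\<^bsub>param_group n\<^esub> q) =
        curve_action n p \<otimes>\<^bsub>BijGroup (curves n)\<^esub> curve_action n q"
      using pq by (auto simp: BijGroup_def Bij)
  qed (simp add: BijGroup_def Bij)
  then show ?thesis
    by (simp add: group_action_def group_hom_def group_hom_axioms_def group_BijGroup)
qed

lemma transforms_iff_curve_action:
  assumes "E \<in> curves n" and "E' \<in> curves n"
  shows "transforms n E p E' \<longleftrightarrow> curve_action n p E' = E"
  using assms by (simp add: transforms_iff curve_action_def curve_mod_curves)

lemma iso_class_eq_orbit: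
  assumes "n \<ge> 2" and "E \<in> curves n"
  shows "iso_class n E = orbit (param_group n) (curve_action n) E"
proof -
  interpret group_action "param_group n" "curves n" "curve_action n"
    using assms(1) by (rule group_action_curve_action)
  have iso_class_iff:
    "E' \<in> iso_class n E \<longleftrightarrow> E' \<in> curves n \<and> E \<in> orbit (param_group n) (curve_action n) E'"
    for E'
  proof (cases "E' \<in> curves n")
    case True
    then show ?thesis
      using assms(2)
      by (simp add: iso_class_def orbit_def param_group_def transforms_iff_curve_action
          del: split_paired_Ex) blast
  qed (simp add: iso_class_def)
  show ?thesis
  proof (intro Set.set_eqI iffI)
    fix E' assume "E' \<in> iso_class n E"
    then show "E' \<in> orbit (param_group n) (curve_action n) E"
      using iso_class_iff assms(2) orbit_sym by blast
  next
    fix E' assume E': "E' \<in> orbit (param_group n) (curve_action n) E"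
    then have "E' \<in> curves n"
      using assms(2) by (auto simp: orbit_def intro: element_image)
    then show "E' \<in> iso_class n E"
      using iso_class_iff E' assms(2) orbit_sym by blast
  qed
qed
lemma Aut_eq_stabilizer:
  assumes "E \<in> curves n"
  shows "Aut n E = stabilizer (param_group n) (curve_action n) E"
  using assms by (auto simp: Aut_def stabilizer_def param_group_def transforms_iff_curve_action)

lemma card_coprime_residues:
  assumes "n \<ge> 2"
  shows "card {u \<in> {0..<n}. coprime u n} = totient (nat n)"
proof -
  have "{u \<in> {0..<n}. coprime u n} = int ` totatives (nat n)"
  proof (intro equalityI subsetI)
    fix u assume u: "u \<in> {u \<in> {0..<n}. coprime u n}"
    then have "u \<noteq> 0"
      using assms by auto
    with u have "nat u \<in> totatives (nat n)"
      by (auto simp: in_totatives_iff coprime_int_iff [symmetric])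
    with u show "u \<in> int ` totatives (nat n)"
      by force
  next
    fix u assume "u \<in> int ` totatives (nat n)"
    then obtain k where k: "k \<in> totatives (nat n)" "u = int k"
      by blast
    then have "k \<noteq> nat n"
      using assms by (auto simp: in_totatives_iff)
    then show "u \<in> {u \<in> {0..<n}. coprime u n}"
      using k assms by (auto simp: in_totatives_iff coprime_int_iff [symmetric])
  qed
  then show ?thesis
    by (simp add: card_image totient_def)
qed

lemma card_params:
  assumes "n \<ge> 2"
  shows "card (params n) = totient (nat (n^4))"
proof -
  have "params n = {u \<in> {0..<n}. coprime u n} \<times> {0..<n} \<times> {0..<n} \<times> {0..<n}"
    by (auto simp: params_def)
  then have "card (params n) = totient (nat n) * nat n ^ 3"
    using assms card_coprime_residues [OF assms]
    by (simp add: card_cartesian_product power3_eq_cube)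
  also have "\<dots> = totient (nat (n^4))"
    using assms by (simp add: totient_power nat_power_eq)
  finally show ?thesis .
qed

theorem theorem11:
  fixes n :: int and E :: wcurve
  assumes "n \<ge> 2" and "E \<in> curves n" and "nonsingular n E"
  shows "real (card (iso_class n E)) = real (totient (nat (n^4))) / real (card (Aut n E))"
proof -
  interpret group_action "param_group n" "curves n" "curve_action n"
    using assms(1) by (rule group_action_curve_action)
  have "card (iso_class n E) * card (Aut n E) = totient (nat (n^4))"
    using orbit_stabilizer_theorem [OF assms(2)] assms(1,2)
    by (simp add: iso_class_eq_orbit Aut_eq_stabilizer order_def param_group_def card_params)
  moreover have "card (Aut n E) > 0"
  proof -
    have "finite (Aut n E)"
      by (rule finite_subset [of _ "{0..<n} \<times> {0..<n} \<times> {0..<n} \<times> {0..<n}"])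
        (auto simp: Aut_def params_def)
    moreover have "(1, 0, 0, 0) \<in> Aut n E"
      using assms(1,2) stabilizer_one_closed by (simp add: Aut_eq_stabilizer param_group_def)
    ultimately show ?thesis
      by (auto simp: card_gt_0_iff)
  qed
  ultimately show ?thesis
    by (simp add: field_simps flip: of_nat_mult)
qed

end
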